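(* Let $n$ be sufficiently large and let $K_{2n+1}$ be ND-coloured. Let $x,y\in V(K_{2n+1})$ be distinct vertices, let $C\subseteq C(K_{2n+1})$ be a set of $100$ colours, and let $X\subseteq V(K_{2n+1})$ and $C'\subseteq C(K_{2n+1})$ satisfy $|X|\leq n/10^3$ and $|C'|\leq n/10^3$. Then there is a set $\bar{C}\subseteq C(K_{2n+1})\setminus (C\cup C')$ of $694$ colours and a set $\bar{X}\subseteq V(K_{2n+1})\setminus X$ of at most $1500$ vertices such that, for each $c\in C$, there is a $(\bar{C}\cup \{c\})$-rainbow $x,y$-path of length $695$ all of whose internal vertices lie in $\bar{X}$.
   Context: ND-colouring of $K_{2n+1}$: vertex set $\{0,\dots,2n\}$, edge $ij$ has colour $k\in\{1,\dots,n\}$ where $i-j\equiv\pm k\pmod{2n+1}$; $C(K_{2n+1})=\{1,\dots,n\}$. A graph is $D$-rainbow if its edges have distinct colours all in $D$. Length of a path is its number of edges. *)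

theory Defs
  imports Complex_Main
begin

text \<open>ND-colouring of K_{2n+1} on vertex set {0..2n}: edge ij gets colour k in {1..n}
  with i - j = +-k mod (2n+1).\<close>

definition nd_colour :: "nat \<Rightarrow> nat \<Rightarrow> nat \<Rightarrow> nat" where
  "nd_colour n i j = (let d = (int i - int j) mod (2 * int n + 1)
                      in nat (if d \<le> int n then d else 2 * int n + 1 - d))"

definition nd_vertices :: "nat \<Rightarrow> nat set" where
  "nd_vertices n = {0..2*n}"

definition nd_colours :: "nat \<Rightarrow> nat set" where
  "nd_colours n = {1..n}"

definition is_path :: "nat \<Rightarrow> nat list \<Rightarrow> bool" where
  "is_path n ps \<longleftrightarrow> ps \<noteq> [] \<and> distinct ps \<and> set ps \<subseteq> nd_vertices n"

definition path_len :: "nat list \<Rightarrow> nat" where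
  "path_len ps = length ps - 1"

definition path_colours :: "nat \<Rightarrow> nat list \<Rightarrow> nat list" where
  "path_colours n ps = map (\<lambda>k. nd_colour n (ps ! k) (ps ! Suc k)) [0..<length ps - 1]"

definition rainbow :: "nat \<Rightarrow> nat set \<Rightarrow> nat list \<Rightarrow> bool" where
  "rainbow n D ps \<longleftrightarrow> distinct (path_colours n ps) \<and> set (path_colours n ps) \<subseteq> D"

definition internal_vertices :: "nat list \<Rightarrow> nat set" where
  "internal_vertices ps = set (butlast (tl ps))"

end

(* The vertices are the residues modulo 2n + 1 and the colour of uv is the circular
   distance between u and v, so every vertex has at most two neighbours of any given
   colour.  The paths P c, one for each c in C, are grown simultaneously and greedily
   from x: a new vertex only has to avoid O(1) + n/1000 used or forbidden vertices and
   the at most two neighbours of the current endpoint in each of the O(1) + n/1000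
   forbidden colours, so for large n one always exists.
   A gadget of five new vertices lets the path for one colour c absorb c while the
   other paths do not: put m = h + c/2 and h' = h + c, the reflection of h through m,
   and choose a fresh g; the path for c runs h, h', reflect g, m and every other path
   runs h, g, m.  Reflection through m preserves colours, so both routes use the same
   two new colours apart from c = colour(h h').  After the 100 gadgets, 392 one-vertex
   extensions and a last vertex joined to y give paths of length 695 that share 694
   colours besides their own colour c. *)

theory Submission
  imports Defs "HOL-Number_Theory.Cong"
begin

section \<open>Arithmetic of the ND-colouring\<close>

abbreviation nd_modulus :: "nat \<Rightarrow> int" where
  "nd_modulus n \<equiv> 2 * int n + 1"

definition nd_norm :: "nat \<Rightarrow> int \<Rightarrow> nat" where
  "nd_norm n z = (let d = z mod nd_modulus n in nat (if d \<le> int n then d else nd_modulus n - d))"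

lemma nd_colour_eq_nd_norm: "nd_colour n i j = nd_norm n (int i - int j)"
  by (simp add: nd_colour_def nd_norm_def)

lemma nd_norm_cong:
  assumes "[a = b] (mod nd_modulus n)"
  shows "nd_norm n a = nd_norm n b"
  using assms by (simp add: nd_norm_def cong_def)

lemma nd_norm_le: "nd_norm n z \<le> n"
  by (auto simp: nd_norm_def Let_def)

lemma nd_norm_cases:
  "[z = int (nd_norm n z)] (mod nd_modulus n) \<or> [z = - int (nd_norm n z)] (mod nd_modulus n)"
proof (cases "z mod nd_modulus n \<le> int n")
  case True
  then show ?thesis by (simp add: nd_norm_def cong_def)
next
  case False
  then have "int (nd_norm n z) = nd_modulus n - z mod nd_modulus n"
    using pos_mod_bound[of "nd_modulus n" z] by (simp add: nd_norm_def)
  then have "- int (nd_norm n z) - z mod nd_modulus n = - nd_modulus n"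
    by simp
  then have "[- int (nd_norm n z) = z mod nd_modulus n] (mod nd_modulus n)"
    unfolding cong_iff_dvd_diff by (metis dvd_minus_iff dvd_refl)
  then show ?thesis by (metis cong_mod_right cong_sym)
qed

lemma nd_norm_of_nat: "k \<le> n \<Longrightarrow> nd_norm n (int k) = k"
  by (simp add: nd_norm_def)

lemma nd_norm_uminus [simp]: "nd_norm n (- z) = nd_norm n z"
  by (auto simp: nd_norm_def Let_def zmod_zminus1_eq_if)

lemma nd_norm_eq_iff:
  "nd_norm n a = nd_norm n b \<longleftrightarrow> [a = b] (mod nd_modulus n) \<or> [a = - b] (mod nd_modulus n)"
proof
  assume "nd_norm n a = nd_norm n b"
  then show "[a = b] (mod nd_modulus n) \<or> [a = - b] (mod nd_modulus n)"
    using nd_norm_cases[of a n] nd_norm_cases[of b n] unfolding cong_iff_dvd_diff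
    by (smt (verit) dvd_diff dvd_add dvd_minus_iff)
next
  assume "[a = b] (mod nd_modulus n) \<or> [a = - b] (mod nd_modulus n)"
  then show "nd_norm n a = nd_norm n b"
    by (metis nd_norm_cong nd_norm_uminus)
qed

lemma nd_norm_eq_0_iff: "nd_norm n z = 0 \<longleftrightarrow> [z = 0] (mod nd_modulus n)"
  using nd_norm_eq_iff[of n z 0] nd_norm_of_nat[of 0 n] by simp

lemma nd_norm_of_colour: "k \<in> nd_colours n \<Longrightarrow> nd_norm n (int k) = k"
  by (simp add: nd_norm_of_nat nd_colours_def)

definition nd_vertex :: "nat \<Rightarrow> int \<Rightarrow> nat" where
  "nd_vertex n z = nat (z mod nd_modulus n)"

lemma finite_nd_vertices [simp]: "finite (nd_vertices n)"
  by (simp add: nd_vertices_def)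

lemma finite_nd_colours [simp]: "finite (nd_colours n)"
  by (simp add: nd_colours_def)

lemma nd_vertex_in_vertices [simp]: "nd_vertex n z \<in> nd_vertices n"
  using pos_mod_bound[of "nd_modulus n" z] by (simp add: nd_vertex_def nd_vertices_def)

lemma int_nd_vertex_cong: "[int (nd_vertex n z) = z] (mod nd_modulus n)"
  by (simp add: nd_vertex_def cong_def)

lemma nd_vertex_eq_iff: "nd_vertex n a = nd_vertex n b \<longleftrightarrow> [a = b] (mod nd_modulus n)"
  by (simp add: nd_vertex_def cong_def nat_eq_iff)

lemma nd_vertex_int: "v \<in> nd_vertices n \<Longrightarrow> nd_vertex n (int v) = v"
  by (simp add: nd_vertex_def nd_vertices_def)

lemma eq_nd_vertex_iff:
  "v \<in> nd_vertices n \<Longrightarrow> v = nd_vertex n z \<longleftrightarrow> [int v = z] (mod nd_modulus n)"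
  using nd_vertex_eq_iff[of n "int v" z] by (simp add: nd_vertex_int)

lemma nd_colour_nd_vertex: "nd_colour n (nd_vertex n a) (nd_vertex n b) = nd_norm n (a - b)"
  unfolding nd_colour_eq_nd_norm
  by (intro nd_norm_cong cong_diff int_nd_vertex_cong)

lemma nd_colour_commute: "nd_colour n u v = nd_colour n v u"
  unfolding nd_colour_eq_nd_norm by (metis nd_norm_uminus minus_diff_eq)

lemma nd_colour_self [simp]: "nd_colour n v v = 0"
  by (simp add: nd_colour_eq_nd_norm nd_norm_of_nat[of 0, simplified])

lemma nd_colour_in_colours:
  assumes "u \<in> nd_vertices n" "v \<in> nd_vertices n" "u \<noteq> v"
  shows "nd_colour n u v \<in> nd_colours n"
proof -
  have "\<not> [int u - int v = 0] (mod nd_modulus n)"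
    using assms eq_nd_vertex_iff[of u n "int v"] nd_vertex_int[of v n] by (simp add: cong_diff_iff_cong_0)
  then show ?thesis
    using nd_norm_le[of n "int u - int v"]
    by (auto simp: nd_colour_eq_nd_norm nd_colours_def nd_norm_eq_0_iff[symmetric])
qed

lemma cong_double_mult_inverse: "[2 * (a * (int n + 1)) = a] (mod nd_modulus n)"
proof -
  have "2 * (a * (int n + 1)) - a = nd_modulus n * a" by (simp add: algebra_simps)
  then show ?thesis by (simp add: cong_iff_dvd_diff)
qed

(* n + 1 is the inverse of 2 modulo 2n + 1. *)
definition nd_midpoint :: "nat \<Rightarrow> nat \<Rightarrow> nat \<Rightarrow> nat" where
  "nd_midpoint n u w = nd_vertex n ((int u + int w) * (int n + 1))"

lemma nd_colour_eq_imp_midpoint: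
  assumes "u \<in> nd_vertices n" "v \<in> nd_vertices n" "w \<in> nd_vertices n"
    and "nd_colour n u v = nd_colour n v w"
  shows "u = w \<or> v = nd_midpoint n u w"
proof -
  have "[int u - int v = int v - int w] (mod nd_modulus n) \<or>
        [int u - int v = - (int v - int w)] (mod nd_modulus n)"
    using assms(4) by (simp add: nd_colour_eq_nd_norm nd_norm_eq_iff)
  then show ?thesis
  proof
    assume "[int u - int v = int v - int w] (mod nd_modulus n)"
    then have "[2 * int v = int u + int w] (mod nd_modulus n)"
      unfolding cong_iff_dvd_diff by (simp add: dvd_diff_commute algebra_simps)
    then have "[2 * int v * (int n + 1) = (int u + int w) * (int n + 1)] (mod nd_modulus n)"
      by (rule cong_mult[OF _ cong_refl])
    then have "[2 * (int v * (int n + 1)) = (int u + int w) * (int n + 1)] (mod nd_modulus n)"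
      by (simp only: mult.assoc)
    then have "[int v = (int u + int w) * (int n + 1)] (mod nd_modulus n)"
      using cong_double_mult_inverse[of "int v" n] by (metis cong_sym cong_trans)
    then show ?thesis
      using assms(2) by (simp add: nd_midpoint_def eq_nd_vertex_iff)
  next
    assume "[int u - int v = - (int v - int w)] (mod nd_modulus n)"
    then have "[int u = int w] (mod nd_modulus n)"
      unfolding cong_iff_dvd_diff by simp
    then show ?thesis
      using assms(1,3) by (metis eq_nd_vertex_iff nd_vertex_int)
  qed
qed

definition nd_reflect :: "nat \<Rightarrow> nat \<Rightarrow> nat \<Rightarrow> nat" where
  "nd_reflect n m u = nd_vertex n (2 * int m - int u)"

lemma nd_colour_nd_reflect: "nd_colour n (nd_reflect n m u) (nd_reflect n m v) = nd_colour n u v"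
proof -
  have "nd_colour n (nd_reflect n m u) (nd_reflect n m v) = nd_norm n ((2 * int m - int u) - (2 * int m - int v))"
    unfolding nd_reflect_def by (rule nd_colour_nd_vertex)
  also have "(2 * int m - int u) - (2 * int m - int v) = - (int u - int v)" by simp
  finally show ?thesis by (simp only: nd_norm_uminus nd_colour_eq_nd_norm)
qed

lemma nd_reflect_in_vertices [simp]: "nd_reflect n m u \<in> nd_vertices n"
  by (simp add: nd_reflect_def)

lemma nd_reflect_centre: "m \<in> nd_vertices n \<Longrightarrow> nd_reflect n m m = m"
  by (simp add: nd_reflect_def nd_vertex_int)

lemma inj_on_nd_reflect: "inj_on (nd_reflect n m) (nd_vertices n)"
proof (rule inj_onI)
  fix u v assume "u \<in> nd_vertices n" "v \<in> nd_vertices n" "nd_reflect n m u = nd_reflect n m v"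
  then have "[int u = int v] (mod nd_modulus n)"
    unfolding nd_reflect_def nd_vertex_eq_iff cong_iff_dvd_diff by (simp add: dvd_diff_commute)
  with \<open>u \<in> nd_vertices n\<close> \<open>v \<in> nd_vertices n\<close> show "u = v"
    by (metis eq_nd_vertex_iff nd_vertex_int)
qed

lemma inj_on_nd_shift: "inj_on (\<lambda>v. nd_vertex n (int v + s)) (nd_vertices n)"
proof (rule inj_onI)
  fix u v assume "u \<in> nd_vertices n" "v \<in> nd_vertices n" "nd_vertex n (int u + s) = nd_vertex n (int v + s)"
  then show "u = v"
    unfolding nd_vertex_eq_iff cong_add_rcancel by (metis eq_nd_vertex_iff nd_vertex_int)
qed

lemma nd_half_shift_centre:
  assumes "h \<in> nd_vertices n" "c \<in> nd_colours n"
  defines "m \<equiv> nd_vertex n (int h + int c * (int n + 1))"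
  shows "nd_reflect n m h = nd_vertex n (int h + int c)"
    and "nd_colour n h (nd_vertex n (int h + int c)) = c"
    and "h \<noteq> m"
proof -
  have "[2 * int m - int h = 2 * (int h + int c * (int n + 1)) - int h] (mod nd_modulus n)"
    unfolding m_def by (intro cong_diff cong_mult cong_refl int_nd_vertex_cong)
  also have "2 * (int h + int c * (int n + 1)) - int h = int h + 2 * (int c * (int n + 1))"
    by simp
  also have "[\<dots> = int h + int c] (mod nd_modulus n)"
    by (intro cong_add cong_refl cong_double_mult_inverse)
  finally show reflect: "nd_reflect n m h = nd_vertex n (int h + int c)"
    unfolding nd_reflect_def nd_vertex_eq_iff .
  have "nd_colour n h (nd_vertex n (int h + int c)) = nd_norm n (int h - (int h + int c))"
    using nd_colour_nd_vertex[of n "int h" "int h + int c"] assms(1) by (simp add: nd_vertex_int)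
  also have "\<dots> = c"
    using assms(2) by (simp add: nd_norm_of_colour)
  finally show colour: "nd_colour n h (nd_vertex n (int h + int c)) = c" .
  show "h \<noteq> m"
  proof
    assume "h = m"
    then have "nd_vertex n (int h + int c) = h"
      using reflect nd_reflect_centre[OF assms(1)] by simp
    then show False
      using colour assms(2) by (simp add: nd_colours_def)
  qed
qed

section \<open>Choosing fresh vertices\<close>

lemma nd_colour_eq_imp_vertex:
  assumes "v \<in> nd_vertices n" "nd_colour n u v = d"
  shows "v = nd_vertex n (int u - int d) \<or> v = nd_vertex n (int u + int d)"
proof -
  have "[int u - int v = int d] (mod nd_modulus n) \<or> [int u - int v = - int d] (mod nd_modulus n)"
    using assms(2) nd_norm_cases[of "int u - int v" n] by (simp add: nd_colour_eq_nd_norm)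
  then have "[int v = int u - int d] (mod nd_modulus n) \<or> [int v = int u + int d] (mod nd_modulus n)"
    unfolding cong_iff_dvd_diff by (simp add: dvd_diff_commute algebra_simps)
  then show ?thesis using eq_nd_vertex_iff[OF assms(1)] by blast
qed

lemma card_colour_neighbours_le:
  assumes "finite D"
  shows "card {v \<in> nd_vertices n. nd_colour n u v \<in> D} \<le> 2 * card D"
proof -
  let ?A = "(\<lambda>d. nd_vertex n (int u - int d)) ` D" and ?B = "(\<lambda>d. nd_vertex n (int u + int d)) ` D"
  have "{v \<in> nd_vertices n. nd_colour n u v \<in> D} \<subseteq> ?A \<union> ?B"
    using nd_colour_eq_imp_vertex by blast
  then have "card {v \<in> nd_vertices n. nd_colour n u v \<in> D} \<le> card (?A \<union> ?B)"
    using assms by (intro card_mono) auto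
  also have "\<dots> \<le> 2 * card D"
    using card_Un_le[of ?A ?B] card_image_le[OF assms, of "\<lambda>d. nd_vertex n (int u - int d)"]
      card_image_le[OF assms, of "\<lambda>d. nd_vertex n (int u + int d)"] by linarith
  finally show ?thesis .
qed

lemma ex_vertex_avoiding:
  assumes "\<forall>f\<in>set fs. inj_on f (nd_vertices n)" "finite W" "finite D"
    and "(1 + length fs) * card W + 2 * length us * card D \<le> 2 * n"
  obtains v where "v \<in> nd_vertices n" "v \<notin> W" "\<forall>f\<in>set fs. f v \<notin> W"
    "\<forall>u\<in>set us. nd_colour n u v \<notin> D"
proof -
  let ?F = "\<Union>f\<in>set fs. f -` W \<inter> nd_vertices n"
  let ?U = "\<Union>u\<in>set us. {v \<in> nd_vertices n. nd_colour n u v \<in> D}"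
  have "card ?F \<le> (\<Sum>f\<in>set fs. card (f -` W \<inter> nd_vertices n))"
    by (rule card_UN_le) simp
  also have "\<dots> \<le> (\<Sum>f\<in>set fs. card W)"
    using assms(1) by (intro sum_mono card_vimage_inj_on_le assms(2)) simp
  also have "\<dots> \<le> length fs * card W"
    by (simp add: card_length)
  finally have F: "card ?F \<le> length fs * card W" .
  have "card ?U \<le> (\<Sum>u\<in>set us. card {v \<in> nd_vertices n. nd_colour n u v \<in> D})"
    by (rule card_UN_le) simp
  also have "\<dots> \<le> (\<Sum>u\<in>set us. 2 * card D)"
    by (intro sum_mono card_colour_neighbours_le assms(3))
  also have "\<dots> \<le> 2 * length us * card D"
    by (simp add: card_length)
  finally have U: "card ?U \<le> 2 * length us * card D" .
  have "card (W \<union> ?F \<union> ?U) \<le> card W + card ?F + card ?U"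
    using card_Un_le[of "W \<union> ?F" ?U] card_Un_le[of W ?F] by linarith
  also have "\<dots> < card (nd_vertices n)"
    using F U assms(4) by (simp add: nd_vertices_def algebra_simps)
  finally have less: "card (W \<union> ?F \<union> ?U) < card (nd_vertices n)" .
  have "W \<union> ?F \<union> ?U \<subseteq> W \<union> nd_vertices n"
    by blast
  then have finite: "finite (W \<union> ?F \<union> ?U)"
    by (rule finite_subset) (simp add: assms(2))
  have "\<not> nd_vertices n \<subseteq> W \<union> ?F \<union> ?U"
  proof
    assume "nd_vertices n \<subseteq> W \<union> ?F \<union> ?U"
    from card_mono[OF finite this] less show False by simp
  qed
  then obtain v where "v \<in> nd_vertices n" "v \<notin> W \<union> ?F \<union> ?U"
    by blast
  then show ?thesis
    by (intro that) auto
qed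

lemma ex_centred_edge:
  assumes c: "c \<in> nd_colours n" and "finite W" "finite D" "3 * card W + 2 * card D \<le> 2 * n"
  obtains h h' m where "{h, h', m} \<subseteq> nd_vertices n - W" "distinct [h, h', m]"
    "nd_colour n h h' = c" "nd_reflect n m h = h'" "nd_colour n w h \<notin> D"
proof -
  define e where "e = int c * (int n + 1)" \<comment> \<open>c / 2 modulo 2n + 1\<close>
  obtain h where h: "h \<in> nd_vertices n" "h \<notin> W" "nd_vertex n (int h + e) \<notin> W"
      "nd_vertex n (int h + int c) \<notin> W" "nd_colour n w h \<notin> D"
  proof (rule ex_vertex_avoiding[where n = n and W = W and D = D and us = "[w]"
        and fs = "[\<lambda>v. nd_vertex n (int v + e), \<lambda>v. nd_vertex n (int v + int c)]"])
    show "\<forall>f\<in>set [\<lambda>v. nd_vertex n (int v + e), \<lambda>v. nd_vertex n (int v + int c)].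
        inj_on f (nd_vertices n)"
      using inj_on_nd_shift by simp
  qed (use assms that in auto)
  define m where "m = nd_vertex n (int h + e)"
  define h' where "h' = nd_vertex n (int h + int c)"
  have gadget: "nd_reflect n m h = h'" "nd_colour n h h' = c" "h \<noteq> m"
    using nd_half_shift_centre[OF h(1) c] unfolding e_def[symmetric] m_def[symmetric] h'_def[symmetric] .
  have m: "m \<in> nd_vertices n"
    by (simp add: m_def)
  have "h' \<noteq> m"
  proof
    assume "h' = m"
    then have "nd_reflect n m h = nd_reflect n m m"
      using gadget(1) nd_reflect_centre[OF m] by simp
    then show False
      using inj_onD[OF inj_on_nd_reflect _ h(1) m] gadget(3) by blast
  qed
  moreover have "h \<noteq> h'"
    using gadget(2) c by (auto simp: nd_colours_def)
  ultimately show ?thesis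
    using that[of h h' m] gadget h by (simp add: m_def h'_def)
qed

lemma ex_vertex_between:
  assumes "u \<in> nd_vertices n" "v \<in> nd_vertices n" "u \<noteq> v"
    and "\<forall>f\<in>set fs. inj_on f (nd_vertices n)" "finite W" "finite D"
    and "(1 + length fs) * (card W + 1) + 4 * card D \<le> 2 * n"
  obtains z where "z \<in> nd_vertices n" "z \<notin> W" "\<forall>f\<in>set fs. f z \<notin> W"
    "nd_colour n u z \<notin> D" "nd_colour n z v \<notin> D" "nd_colour n u z \<noteq> nd_colour n z v"
proof -
  let ?W = "insert (nd_midpoint n u v) W"
  have "card ?W \<le> card W + 1"
    using assms(5) by (simp add: card_insert_if)
  then have "(1 + length fs) * card ?W + 2 * length [u, v] * card D \<le> 2 * n"
    using assms(7) mult_le_mono2[of "card ?W" "card W + 1" "1 + length fs"] by simp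
  then obtain z where z: "z \<in> nd_vertices n" "z \<notin> ?W" "\<forall>f\<in>set fs. f z \<notin> ?W"
      "\<forall>u\<in>set [u, v]. nd_colour n u z \<notin> D"
    using ex_vertex_avoiding[of fs n ?W D "[u, v]"] assms(4-6) by auto
  have "nd_colour n u z \<noteq> nd_colour n z v"
    using nd_colour_eq_imp_midpoint[of u n z v] assms(1-3) z(1,2) by auto
  then show ?thesis
    using that[of z] z by (auto simp: nd_colour_commute)
qed

section \<open>Growing the paths\<close>

lemma path_colours_singleton [simp]: "path_colours n [a] = []"
  by (simp add: path_colours_def)

lemma path_colours_Cons_Cons [simp]:
  "path_colours n (a # b # xs) = nd_colour n a b # path_colours n (b # xs)"
  by (simp add: path_colours_def upt_conv_Cons map_Suc_upt[symmetric] del: upt_Suc)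

lemma path_colours_append:
  "ps \<noteq> [] \<Longrightarrow> path_colours n (ps @ qs) = path_colours n ps @ path_colours n (last ps # qs)"
  by (induction ps rule: induct_list012) auto

lemma length_path_colours: "length (path_colours n ps) = path_len ps"
  by (simp add: path_colours_def path_len_def)

locale rainbow_linkage =
  fixes n x y :: nat and C X C' :: "nat set"
  assumes x_in: "x \<in> nd_vertices n" and y_in: "y \<in> nd_vertices n" and x_ne_y: "x \<noteq> y"
    and C_sub: "C \<subseteq> nd_colours n" and card_C: "card C = 100"
    and X_sub: "X \<subseteq> nd_vertices n" and C'_sub: "C' \<subseteq> nd_colours n"
    and card_X: "real (card X) \<le> real n / 10^3" and card_C': "real (card C') \<le> real n / 10^3"
    and n_large: "10000 \<le> n"
begin

lemma finite_parameters: "finite X" "finite C" "finite C'"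
  using finite_subset[OF X_sub] finite_subset[OF C_sub] finite_subset[OF C'_sub] by simp_all

lemma forbidden_sets_small:
  assumes "card V \<le> 1004" "card Cb \<le> 701"
  shows "3 * card (V \<union> X \<union> {x, y}) + 4 * card (Cb \<union> C \<union> C') + 2 \<le> 2 * n"
proof -
  have "card (V \<union> X \<union> {x, y}) \<le> card V + card X + 2"
    using card_Un_le[of "V \<union> X" "{x, y}"] card_Un_le[of V X] x_ne_y by simp
  moreover have "card (Cb \<union> C \<union> C') \<le> card Cb + card C + card C'"
    using card_Un_le[of "Cb \<union> C" C'] card_Un_le[of Cb C] by linarith
  moreover have "1000 * card X \<le> n" "1000 * card C' \<le> n"
    using card_X card_C' by (simp_all add: field_simps)
  ultimately show ?thesis
    using assms card_C n_large by linarith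
qed

text \<open>S is the set of colours c whose gadget has already been built, i.e. whose path P c
  already uses c.\<close>

definition path_system ::
    "nat set \<Rightarrow> nat set \<Rightarrow> nat set \<Rightarrow> nat \<Rightarrow> (nat \<Rightarrow> nat list) \<Rightarrow> bool" where
  "path_system S Cb V w P \<longleftrightarrow>
     V \<subseteq> nd_vertices n - X - {x, y} \<and> Cb \<subseteq> nd_colours n - (C \<union> C') \<and>
     (\<forall>c\<in>C. is_path n (P c) \<and> hd (P c) = x \<and> last (P c) = w \<and> set (tl (P c)) \<subseteq> V \<and>
        distinct (path_colours n (P c)) \<and> set (path_colours n (P c)) = Cb \<union> ({c} \<inter> S))"

lemma path_system_finite:
  assumes "path_system S Cb V w P"
  shows "finite V" "finite Cb"
  using assms finite_subset[of V "nd_vertices n"] finite_subset[of Cb "nd_colours n"]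
  by (auto simp: path_system_def)

lemma path_system_set_subset:
  assumes "path_system S Cb V w P" "c \<in> C"
  shows "set (P c) \<subseteq> insert x V"
proof -
  have "hd (P c) = x" "set (tl (P c)) \<subseteq> V"
    using assms by (auto simp: path_system_def)
  then show ?thesis by (cases "P c") auto
qed

lemma path_system_endpoint:
  assumes "path_system S Cb V w P"
  shows "w \<in> insert x V"
proof -
  obtain c where c: "c \<in> C"
    using card_C by (metis card.empty ex_in_conv zero_neq_numeral)
  then have "P c \<noteq> []" "last (P c) = w"
    using assms by (auto simp: path_system_def is_path_def)
  then show ?thesis
    using path_system_set_subset[OF assms c] last_in_set by blast
qed

lemma path_system_start: "path_system {} {} {} x (\<lambda>c. [x])"
  using x_in by (simp add: path_system_def is_path_def)

lemma path_system_append: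
  assumes P: "path_system S Cb V w P" and "S \<subseteq> S'"
    and V': "V' \<subseteq> nd_vertices n - X - {x, y} - V"
    and Cb': "Cb' \<subseteq> nd_colours n - (C \<union> C') - Cb"
    and Q: "\<And>c. c \<in> C \<Longrightarrow> Q c \<noteq> [] \<and> distinct (Q c) \<and> set (Q c) \<subseteq> V' \<and> last (Q c) = w' \<and>
        distinct (path_colours n (w # Q c)) \<and> set (path_colours n (w # Q c)) = Cb' \<union> ({c} \<inter> (S' - S))"
  shows "path_system S' (Cb \<union> Cb') (V \<union> V') w' (\<lambda>c. P c @ Q c)"
  unfolding path_system_def
proof (intro conjI ballI)
  show "V \<union> V' \<subseteq> nd_vertices n - X - {x, y}" "Cb \<union> Cb' \<subseteq> nd_colours n - (C \<union> C')"
    using P V' Cb' by (auto simp: path_system_def)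
  fix c assume c: "c \<in> C"
  have Pc: "is_path n (P c)" "hd (P c) = x" "last (P c) = w" "set (tl (P c)) \<subseteq> V"
      "distinct (path_colours n (P c))" "set (path_colours n (P c)) = Cb \<union> ({c} \<inter> S)"
    using P c by (auto simp: path_system_def)
  have ne: "P c \<noteq> []"
    using Pc(1) by (simp add: is_path_def)
  have "set (P c) \<inter> set (Q c) = {}"
    using path_system_set_subset[OF P c] Q[OF c] V' by blast
  then show "is_path n (P c @ Q c)"
    using Pc(1) Q[OF c] V' by (auto simp: is_path_def)
  show "hd (P c @ Q c) = x" "last (P c @ Q c) = w'"
    using ne Pc(2) Q[OF c] by simp_all
  show "set (tl (P c @ Q c)) \<subseteq> V \<union> V'"
    using ne Pc(4) Q[OF c] by auto
  have colours: "path_colours n (P c @ Q c) = path_colours n (P c) @ path_colours n (w # Q c)"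
    using path_colours_append[OF ne] Pc(3) by simp
  have "c \<notin> Cb \<union> Cb'"
    using P Cb' c by (auto simp: path_system_def)
  then show "distinct (path_colours n (P c @ Q c))"
    unfolding colours using Pc(5,6) Q[OF c] Cb' by auto
  show "set (path_colours n (P c @ Q c)) = Cb \<union> Cb' \<union> ({c} \<inter> S')"
    unfolding colours using Pc(6) Q[OF c] \<open>S \<subseteq> S'\<close> by auto
qed

lemma path_system_snoc:
  assumes P: "path_system S Cb V w P" and v: "v \<in> nd_vertices n" "v \<notin> V \<union> X \<union> {x, y}"
    and colour: "nd_colour n w v \<notin> Cb \<union> C \<union> C'"
  shows "path_system S (insert (nd_colour n w v) Cb) (insert v V) v (\<lambda>c. P c @ [v])"
proof -
  have w: "w \<in> insert x V" "insert x V \<subseteq> nd_vertices n"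
    using path_system_endpoint[OF P] P x_in by (auto simp: path_system_def)
  then have "nd_colour n w v \<in> nd_colours n"
    using v by (intro nd_colour_in_colours) auto
  then have "path_system S (Cb \<union> {nd_colour n w v}) (V \<union> {v}) v (\<lambda>c. P c @ [v])"
    using v colour w by (intro path_system_append[OF P order_refl]) auto
  then show ?thesis by simp
qed

lemma ex_path_system_snoc:
  assumes P: "path_system S Cb V w P" and "card V \<le> 1000" "card Cb \<le> 700"
  shows "\<exists>Cb' V' w' P'. path_system S Cb' V' w' P' \<and> card Cb' = Suc (card Cb) \<and> card V' \<le> Suc (card V)"
proof -
  note fin = path_system_finite[OF P]
  obtain v where v: "v \<in> nd_vertices n" "v \<notin> V \<union> X \<union> {x, y}"
      "nd_colour n w v \<notin> Cb \<union> C \<union> C'"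
    using ex_vertex_avoiding[where n = n and fs = "[]" and W = "V \<union> X \<union> {x, y}"
        and D = "Cb \<union> C \<union> C'" and us = "[w]"] forbidden_sets_small[of V Cb] assms fin finite_parameters
    by auto
  then show ?thesis
    using path_system_snoc[OF P v] fin card_insert_le[of V v] by fastforce
qed

lemma ex_path_system_gadget:
  assumes P: "path_system S Cb V w P" and c0: "c0 \<in> C - S" and "card V \<le> 1000" "card Cb \<le> 700"
  shows "\<exists>Cb' V' w' P'. path_system (insert c0 S) Cb' V' w' P' \<and> card Cb' = card Cb + 3 \<and>
    card V' \<le> card V + 5"
proof -
  note fin = path_system_finite[OF P] finite_parameters
  let ?W = "V \<union> X \<union> {x, y}" and ?D = "Cb \<union> C \<union> C'"
  have "c0 \<in> nd_colours n"
    using c0 C_sub by blast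
  then obtain h h' m where h: "{h, h', m} \<subseteq> nd_vertices n - ?W" "distinct [h, h', m]"
      "nd_colour n h h' = c0" "nd_reflect n m h = h'" "nd_colour n w h \<notin> ?D"
    using ex_centred_edge[where n = n and c = c0 and w = w and W = ?W and D = ?D]
      forbidden_sets_small[of V Cb] assms fin by auto
  let ?W' = "(V \<union> {h, h', m}) \<union> X \<union> {x, y}"
  let ?D' = "insert (nd_colour n w h) Cb \<union> C \<union> C'"
  have "card (V \<union> {h, h', m}) \<le> 1003" "card (insert (nd_colour n w h) Cb) \<le> 701"
    using assms fin card_Un_le[of V "{h, h', m}"] by (auto simp: card_insert_if)
  then have "3 * card ?W' + 4 * card ?D' + 2 \<le> 2 * n"
    by (intro forbidden_sets_small) simp_all
  then have "2 * (card ?W' + 1) + 4 * card ?D' \<le> 2 * n"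
    by simp
  then obtain g where g: "g \<in> nd_vertices n" "g \<notin> ?W'" "nd_reflect n m g \<notin> ?W'"
      "nd_colour n h g \<notin> ?D'" "nd_colour n g m \<notin> ?D'" "nd_colour n h g \<noteq> nd_colour n g m"
    using ex_vertex_between[where n = n and fs = "[nd_reflect n m]" and W = ?W' and D = ?D' and u = h and v = m]
      h(1,2) fin inj_on_nd_reflect by auto
  define g' where "g' = nd_reflect n m g"
  have mirrored: "nd_colour n h' g' = nd_colour n h g" "nd_colour n g' m = nd_colour n g m"
    using nd_colour_nd_reflect[of n m h g] nd_colour_nd_reflect[of n m g m] nd_reflect_centre[of m n]
      h(1,4) by (auto simp: g'_def)
  let ?k0 = "nd_colour n w h" and ?k1 = "nd_colour n h g" and ?k2 = "nd_colour n g m"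
  have w: "w \<in> insert x V" "w \<in> nd_vertices n"
    using path_system_endpoint[OF P] P x_in by (auto simp: path_system_def)
  have new_colours: "{?k0, ?k1, ?k2} \<subseteq> nd_colours n - (C \<union> C') - Cb"
    using h g w by (auto intro!: nd_colour_in_colours)
  have new_vertices: "{h, h', m, g, g'} \<subseteq> nd_vertices n - X - {x, y} - V"
    using h g by (auto simp: g'_def)
  define Q where "Q c = (if c = c0 then [h, h', g', m] else [h, g, m])" for c
  have "path_system (insert c0 S) (Cb \<union> {?k0, ?k1, ?k2}) (V \<union> {h, h', m, g, g'}) m (\<lambda>c. P c @ Q c)"
  proof (rule path_system_append[OF P _ new_vertices new_colours])
    fix c assume "c \<in> C"
    show "Q c \<noteq> [] \<and> distinct (Q c) \<and> set (Q c) \<subseteq> {h, h', m, g, g'} \<and> last (Q c) = m \<and>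
      distinct (path_colours n (w # Q c)) \<and>
      set (path_colours n (w # Q c)) = {?k0, ?k1, ?k2} \<union> ({c} \<inter> (insert c0 S - S))"
    proof (cases "c = c0")
      case True
      have "path_colours n (w # Q c) = [?k0, c0, ?k1, ?k2]"
        using True h(3) mirrored by (simp add: Q_def)
      then show ?thesis
        using True c0 h g by (auto simp: Q_def g'_def)
    next
      case False
      then show ?thesis
        using h g by (auto simp: Q_def)
    qed
  qed blast
  moreover have "card (Cb \<union> {?k0, ?k1, ?k2}) = card Cb + 3"
    using new_colours h(5) g(4-6) fin by (auto simp: card_insert_if)
  moreover have "card (V \<union> {h, h', m, g, g'}) \<le> card V + 5"
    using card_Un_le[of V "set [h, h', m, g, g']"] card_length[of "[h, h', m, g, g']"] by simp
  ultimately show ?thesis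
    by blast
qed

lemma ex_path_system_gadgets:
  assumes "S \<subseteq> C"
  shows "\<exists>Cb V w P. path_system S Cb V w P \<and> card Cb = 3 * card S \<and> card V \<le> 5 * card S"
  using finite_subset[OF assms finite_parameters(2)] assms
proof (induction S rule: finite_induct)
  case empty
  show ?case
    using path_system_start by fastforce
next
  case (insert c0 S)
  then obtain Cb V w P where P: "path_system S Cb V w P" "card Cb = 3 * card S" "card V \<le> 5 * card S"
    by blast
  have "card S \<le> 100"
    using card_mono[OF finite_parameters(2), of S] insert.prems card_C by simp
  then show ?case
    using ex_path_system_gadget[OF P(1), of c0] P insert by fastforce
qed

lemma ex_path_system_extended:
  assumes "k \<le> 392"
  shows "\<exists>Cb V w P. path_system C Cb V w P \<and> card Cb = 300 + k \<and> card V \<le> 500 + k"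
  using assms
proof (induction k)
  case 0
  show ?case
    using ex_path_system_gadgets[of C] card_C by simp
next
  case (Suc k)
  then obtain Cb V w P where "path_system C Cb V w P" "card Cb = 300 + k" "card V \<le> 500 + k"
    by auto
  then show ?case
    using ex_path_system_snoc[of C Cb V w P] Suc.prems by fastforce
qed

lemma path_system_close:
  assumes P: "path_system C Cb V w P" and colour: "nd_colour n w y \<notin> Cb \<union> C \<union> C'"
  defines "Cb' \<equiv> insert (nd_colour n w y) Cb"
  shows "Cb' \<subseteq> nd_colours n - (C \<union> C')" "card Cb' = card Cb + 1"
    and "\<forall>c\<in>C. \<exists>ps. is_path n ps \<and> hd ps = x \<and> last ps = y \<and> path_len ps = card Cb + 2 \<and>
            rainbow n (Cb' \<union> {c}) ps \<and> internal_vertices ps \<subseteq> V"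
proof -
  have w: "w \<in> insert x V" "insert x V \<subseteq> nd_vertices n" "y \<notin> insert x V"
    using path_system_endpoint[OF P] P x_in x_ne_y by (auto simp: path_system_def)
  then have "nd_colour n w y \<in> nd_colours n"
    using y_in by (intro nd_colour_in_colours) auto
  then show "Cb' \<subseteq> nd_colours n - (C \<union> C')"
    using P colour by (auto simp: path_system_def Cb'_def)
  show "card Cb' = card Cb + 1"
    using colour path_system_finite[OF P] by (simp add: Cb'_def)
  show "\<forall>c\<in>C. \<exists>ps. is_path n ps \<and> hd ps = x \<and> last ps = y \<and> path_len ps = card Cb + 2 \<and>
            rainbow n (Cb' \<union> {c}) ps \<and> internal_vertices ps \<subseteq> V"
  proof
    fix c assume c: "c \<in> C"
    have Pc: "is_path n (P c)" "hd (P c) = x" "last (P c) = w" "set (tl (P c)) \<subseteq> V"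
        "distinct (path_colours n (P c))" "set (path_colours n (P c)) = Cb \<union> {c}"
      using P c by (auto simp: path_system_def)
    have ne: "P c \<noteq> []"
      using Pc(1) by (simp add: is_path_def)
    have colours: "path_colours n (P c @ [y]) = path_colours n (P c) @ [nd_colour n w y]"
      using path_colours_append[OF ne] Pc(3) by simp
    have "c \<notin> Cb" "c \<noteq> nd_colour n w y"
      using P c colour by (auto simp: path_system_def)
    then have rainbow: "rainbow n (Cb' \<union> {c}) (P c @ [y])"
      unfolding rainbow_def colours using Pc(5,6) colour c by (auto simp: Cb'_def)
    have "path_len (P c @ [y]) = card (set (path_colours n (P c @ [y])))"
      using rainbow by (metis distinct_card length_path_colours rainbow_def)
    also have "set (path_colours n (P c @ [y])) = Cb' \<union> {c}"
      unfolding colours using Pc(6) by (auto simp: Cb'_def)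
    also have "card (Cb' \<union> {c}) = card Cb + 2"
      using \<open>c \<notin> Cb\<close> \<open>c \<noteq> nd_colour n w y\<close> colour path_system_finite[OF P]
      by (simp add: Cb'_def)
    finally have "path_len (P c @ [y]) = card Cb + 2" .
    moreover have "is_path n (P c @ [y])"
      using Pc(1) path_system_set_subset[OF P c] w(3) y_in by (auto simp: is_path_def)
    moreover have "internal_vertices (P c @ [y]) \<subseteq> V"
      using ne Pc(4) by (cases "P c") (auto simp: internal_vertices_def butlast_append)
    ultimately show "\<exists>ps. is_path n ps \<and> hd ps = x \<and> last ps = y \<and> path_len ps = card Cb + 2 \<and>
            rainbow n (Cb' \<union> {c}) ps \<and> internal_vertices ps \<subseteq> V"
      using rainbow ne Pc(2) by (intro exI[of _ "P c @ [y]"]) simp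
  qed
qed

lemma rainbow_paths:
  "\<exists>Cb Xb. Cb \<subseteq> nd_colours n - (C \<union> C') \<and> card Cb = 694 \<and>
     Xb \<subseteq> nd_vertices n - X \<and> card Xb \<le> 1500 \<and>
     (\<forall>c\<in>C. \<exists>ps. is_path n ps \<and> hd ps = x \<and> last ps = y \<and> path_len ps = 695 \<and>
        rainbow n (Cb \<union> {c}) ps \<and> internal_vertices ps \<subseteq> Xb)"
proof -
  obtain Cb V w P where P: "path_system C Cb V w P" "card Cb = 692" "card V \<le> 892"
    using ex_path_system_extended[of 392] by auto
  note fin = path_system_finite[OF P(1)] finite_parameters
  have w: "w \<in> nd_vertices n" "w \<noteq> y"
    using path_system_endpoint[OF P(1)] P(1) x_in x_ne_y by (auto simp: path_system_def)
  obtain z where z: "z \<in> nd_vertices n" "z \<notin> V \<union> X \<union> {x, y}"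
      "nd_colour n w z \<notin> Cb \<union> C \<union> C'"
      "nd_colour n z y \<notin> Cb \<union> C \<union> C'" "nd_colour n w z \<noteq> nd_colour n z y"
    using ex_vertex_between[where n = n and fs = "[]" and u = w and v = y and W = "V \<union> X \<union> {x, y}"
        and D = "Cb \<union> C \<union> C'"] forbidden_sets_small[of V Cb] w y_in fin P by auto
  let ?k = "nd_colour n w z"
  have "path_system C (insert ?k Cb) (insert z V) z (\<lambda>c. P c @ [z])"
    using path_system_snoc[OF P(1) z(1-3)] .
  moreover have "nd_colour n z y \<notin> insert ?k Cb \<union> C \<union> C'"
    using z(4,5) by auto
  ultimately have close: "insert (nd_colour n z y) (insert ?k Cb) \<subseteq> nd_colours n - (C \<union> C')"
      "card (insert (nd_colour n z y) (insert ?k Cb)) = card (insert ?k Cb) + 1"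
      "\<forall>c\<in>C. \<exists>ps. is_path n ps \<and> hd ps = x \<and> last ps = y \<and>
         path_len ps = card (insert ?k Cb) + 2 \<and>
         rainbow n (insert (nd_colour n z y) (insert ?k Cb) \<union> {c}) ps \<and>
         internal_vertices ps \<subseteq> insert z V"
    by (rule path_system_close)+
  have "card (insert ?k Cb) = 693"
    using z(3) fin P(2) by simp
  moreover have "insert z V \<subseteq> nd_vertices n - X" "card (insert z V) \<le> 1500"
    using z P(1,3) fin by (auto simp: path_system_def card_insert_if)
  ultimately show ?thesis
    using close by (intro exI[of _ "insert (nd_colour n z y) (insert ?k Cb)"] exI[of _ "insert z V"]) simp
qed

end

theorem lemma5p3:
  shows "\<exists>N. \<forall>n\<ge>N. \<forall>x y C X C'.
     x \<in> nd_vertices n \<and> y \<in> nd_vertices n \<and> x \<noteq> y \<and>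
     C \<subseteq> nd_colours n \<and> card C = 100 \<and>
     X \<subseteq> nd_vertices n \<and> C' \<subseteq> nd_colours n \<and>
     real (card X) \<le> real n / 10^3 \<and> real (card C') \<le> real n / 10^3 \<longrightarrow>
     (\<exists>Cb Xb. Cb \<subseteq> nd_colours n - (C \<union> C') \<and> card Cb = 694 \<and>
        Xb \<subseteq> nd_vertices n - X \<and> card Xb \<le> 1500 \<and>
        (\<forall>c\<in>C. \<exists>ps. is_path n ps \<and> hd ps = x \<and> last ps = y \<and>
              path_len ps = 695 \<and> rainbow n (Cb \<union> {c}) ps \<and>
              internal_vertices ps \<subseteq> Xb))"
  by (intro exI[of _ 10000] allI impI rainbow_linkage.rainbow_paths) (unfold_locales, auto)

end
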